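(* Let $\mathcal{F}=(M,\{A^u\}_{u\in Q})$ be an FDFA and $\overline{B}$ the Büchi automaton constructed from $\mathcal{F}$ as in the context. For every $\omega$-word $w\in UP(L(\overline{B}))$ there exist a decomposition $(u,v)$ of $w$ (i.e., $u\in\Sigma^*$, $v\in\Sigma^+$, $w=uv^\omega$) and $n\geq1$ such that $v=v_1v_2\cdots v_n$ and for all $i\in\{1,\dots,n\}$, $v_i\in L(A^{M(u)})$ and $M(uv_i)=M(u)$.
   Context: $\Sigma$ is a finite alphabet. For a complete DFA $A$ and finite word $w$, $A(w)$ is the state reached from the initial state on $w$. An FDFA is $\mathcal{F}=(M,\{A^q\}_{q\in Q})$ with $M=(\Sigma,Q,q_0,\delta)$ a complete DFA without accepting states and each $A^q=(\Sigma,Q_q,s_q,F_q,\delta_q)$ a complete DFA. For an $\omega$-language $L'$, $UP(L')$ is the set of ultimately periodic words in $L'$. Construction of $\overline{B}$: for a DFA $D$ and states $s,t$, $D^s_t$ is $D$ with initial state $s$ and accepting set $\{t\}$. For $u\in Q$, $v\in F_u$ let $\overline{P}_{(u,v)}=M^u_u\times(A^u)^{s_u}_v$ (synchronous product, single accepting state $f_P$, initial state $s_P$, states $Q_P$, transitions $\delta_P$). From it form the Büchi automaton with $\epsilon$-transitions $(\Sigma,Q_P\cup\{f\},s_P,\{f\},\delta_P\cup\{(f,\epsilon,s_P),(f_P,\epsilon,f)\})$ with $f$ fresh. $\overline{B}$ has state set $Q$ plus disjoint copies of these automata for all $u\in Q$, $v\in F_u$; initial state $q_0$; accepting states the fresh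 states $f$; transitions $\delta$, those of the components, and $\epsilon$-transitions from $u\in Q$ to the initial state of the component for $(u,v)$. An infinite word is accepted if some run (with $\epsilon$-moves) reading it visits accepting states infinitely often. *)

theory Defs
  imports Main "HOL-Library.Omega_Words_Fun"
begin

definition drun :: "('q \<Rightarrow> 'a \<Rightarrow> 'q) \<Rightarrow> 'q \<Rightarrow> 'a list \<Rightarrow> 'q" where
  "drun d p xs = foldl d p xs"

definition complete_dfa :: "'a set \<Rightarrow> 'q set \<Rightarrow> 'q \<Rightarrow> ('q \<Rightarrow> 'a \<Rightarrow> 'q) \<Rightarrow> bool" where
  "complete_dfa Sig Q q0 d \<longleftrightarrow> finite Q \<and> q0 \<in> Q \<and> (\<forall>p\<in>Q. \<forall>a\<in>Sig. d p a \<in> Q)"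

(* FDFA F = (M, {A^q}) with M = (Sig, Q, q0, d) and
   A^q = (Sig, QA q, s q, Fa q, dA q); Sig a finite alphabet *)
definition fdfa ::
  "'a set \<Rightarrow> 'q set \<Rightarrow> 'q \<Rightarrow> ('q \<Rightarrow> 'a \<Rightarrow> 'q)
   \<Rightarrow> ('q \<Rightarrow> 's set) \<Rightarrow> ('q \<Rightarrow> 's) \<Rightarrow> ('q \<Rightarrow> 's set) \<Rightarrow> ('q \<Rightarrow> 's \<Rightarrow> 'a \<Rightarrow> 's) \<Rightarrow> bool" where
  "fdfa Sig Q q0 d QA s Fa dA \<longleftrightarrow> finite Sig \<and> complete_dfa Sig Q q0 d \<and>
     (\<forall>q\<in>Q. complete_dfa Sig (QA q) (s q) (dA q) \<and> Fa q \<subseteq> QA q)"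

definition acc_A :: "'a set \<Rightarrow> ('q \<Rightarrow> 's) \<Rightarrow> ('q \<Rightarrow> 's set) \<Rightarrow> ('q \<Rightarrow> 's \<Rightarrow> 'a \<Rightarrow> 's) \<Rightarrow> 'q \<Rightarrow> 'a list set" where
  "acc_A Sig s Fa dA q = {x. set x \<subseteq> Sig \<and> drun (dA q) (s q) x \<in> Fa q}"

(* States of the Buchi automaton Bbar:
   Top p       : state p of M
   Inner u t p a : state (p,a) of the product P_(u,t) = M^u_u x (A^u)^{s_u}_t (copy for (u,t))
   Fresh u t   : the fresh accepting state f of the copy for (u,t) *)
datatype ('q, 's) bstate = Top 'q | Inner 'q 's 'q 's | Fresh 'q 's

(* Transitions of Bbar; None is an epsilon-transition *)
inductive bstep ::
  "'a set \<Rightarrow> 'q set \<Rightarrow> ('q \<Rightarrow> 'a \<Rightarrow> 'q)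
   \<Rightarrow> ('q \<Rightarrow> 's set) \<Rightarrow> ('q \<Rightarrow> 's) \<Rightarrow> ('q \<Rightarrow> 's set) \<Rightarrow> ('q \<Rightarrow> 's \<Rightarrow> 'a \<Rightarrow> 's)
   \<Rightarrow> ('q, 's) bstate \<Rightarrow> 'a option \<Rightarrow> ('q, 's) bstate \<Rightarrow> bool"
  for Sig Q d QA s Fa dA where
  top: "p \<in> Q \<Longrightarrow> a \<in> Sig \<Longrightarrow> bstep Sig Q d QA s Fa dA (Top p) (Some a) (Top (d p a))"
| enter: "u \<in> Q \<Longrightarrow> t \<in> Fa u \<Longrightarrow> bstep Sig Q d QA s Fa dA (Top u) None (Inner u t u (s u))"
| inner: "u \<in> Q \<Longrightarrow> t \<in> Fa u \<Longrightarrow> p \<in> Q \<Longrightarrow> b \<in> QA u \<Longrightarrow> a \<in> Sig \<Longrightarrow>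
           bstep Sig Q d QA s Fa dA (Inner u t p b) (Some a) (Inner u t (d p a) (dA u b a))"
| to_fresh: "u \<in> Q \<Longrightarrow> t \<in> Fa u \<Longrightarrow> bstep Sig Q d QA s Fa dA (Inner u t u t) None (Fresh u t)"
| from_fresh: "u \<in> Q \<Longrightarrow> t \<in> Fa u \<Longrightarrow> bstep Sig Q d QA s Fa dA (Fresh u t) None (Inner u t u (s u))"

definition consumed :: "(nat \<Rightarrow> 'a option) \<Rightarrow> nat \<Rightarrow> nat" where
  "consumed l i = length (filter (\<lambda>x. x \<noteq> None) (map l [0..<i]))"

definition lang_Bbar ::
  "'a set \<Rightarrow> 'q set \<Rightarrow> 'q \<Rightarrow> ('q \<Rightarrow> 'a \<Rightarrow> 'q)
   \<Rightarrow> ('q \<Rightarrow> 's set) \<Rightarrow> ('q \<Rightarrow> 's) \<Rightarrow> ('q \<Rightarrow> 's set) \<Rightarrow> ('q \<Rightarrow> 's \<Rightarrow> 'a \<Rightarrow> 's) \<Rightarrow> 'a word set" where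
  "lang_Bbar Sig Q q0 d QA s Fa dA = {w. \<exists>r l.
      r 0 = Top q0 \<and>
      (\<forall>i. bstep Sig Q d QA s Fa dA (r i) (l i) (r (Suc i))) \<and>
      (\<forall>i a. l i = Some a \<longrightarrow> w (consumed l i) = a) \<and>
      (\<forall>n. \<exists>i. n \<le> consumed l i) \<and>
      (\<exists>\<^sub>\<infinity>i. \<exists>u t. r i = Fresh u t)}"

definition UP :: "'a word set \<Rightarrow> 'a word set" where
  "UP L = {w \<in> L. \<exists>u v. v \<noteq> [] \<and> w = u \<frown> v\<^sup>\<omega>}"

end

theory Submission
  imports Defs
begin

text \<open>An accepting run of \<open>\<overline>B\<close> stays in the copy of \<open>M\<close> until an \<open>\<epsilon>\<close>-move enters the
  component of some pair \<open>(u, t)\<close>, which it never leaves. Every pass from the fresh state \<open>f\<close> back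
  to \<open>f\<close> reads a word that is accepted by \<open>A\<^sup>u\<close> and loops \<open>M\<close> at \<open>u\<close>, so the word read between
  two visits of \<open>f\<close> is a concatenation of such loops, and \<open>M\<close> reaches \<open>u\<close> on the prefix read
  before the first visit. If \<open>w = u'v'\<^sup>\<omega>\<close>, pigeonhole on the residues modulo \<open>|v'|\<close> of the
  positions of the infinitely many visits yields visits at positions \<open>|u'| \<le> p < q\<close> with
  \<open>|v'|\<close> dividing \<open>q - p\<close>; then \<open>w = w[0,p) w[p,q)\<^sup>\<omega>\<close> is the required decomposition.\<close>

lemma drun_Nil [simp]: "drun d p [] = p"
  by (simp add: drun_def)

lemma drun_append: "drun d p (xs @ ys) = drun d (drun d p xs) ys"
  by (simp add: drun_def)

lemma drun_snoc [simp]: "drun d p (xs @ [a]) = d (drun d p xs) a"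
  by (simp add: drun_def)

lemma subsequence_split: "i \<le> j \<Longrightarrow> j \<le> k \<Longrightarrow> w [i \<rightarrow> k] = w [i \<rightarrow> j] @ w [j \<rightarrow> k]"
  unfolding subsequence_def by (metis le_add_diff_inverse map_append upt_add_eq_append)

lemma consumed_Suc: "consumed l (Suc i) = (if l i = None then consumed l i else Suc (consumed l i))"
  by (simp add: consumed_def)

lemma mono_consumed: "mono (consumed l)"
proof (rule monoI)
  show "consumed l i \<le> consumed l j" if "i \<le> j" for i j
    using that by (induction j rule: dec_induct) (auto simp: consumed_Suc)
qed

definition loop_words ::
  "'a set \<Rightarrow> ('q \<Rightarrow> 'a \<Rightarrow> 'q) \<Rightarrow> ('q \<Rightarrow> 's) \<Rightarrow> ('q \<Rightarrow> 's set) \<Rightarrow> ('q \<Rightarrow> 's \<Rightarrow> 'a \<Rightarrow> 's)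
   \<Rightarrow> 'q \<Rightarrow> 'a list set" where
  "loop_words Sig d s Fa dA u = {y \<in> acc_A Sig s Fa dA u. drun d u y = u}"

lemma Nil_in_concat_lists [simp]: "[] \<in> concat ` lists L"
  by (rule image_eqI[of _ _ "[]"]) simp_all

lemma concat_lists_snoc: "x \<in> concat ` lists L \<Longrightarrow> y \<in> L \<Longrightarrow> x @ y \<in> concat ` lists L"
proof -
  assume "x \<in> concat ` lists L" and "y \<in> L"
  then obtain vs where "x = concat vs" "vs \<in> lists L" by blast
  then have "x @ y = concat (vs @ [y])" "vs @ [y] \<in> lists L" using \<open>y \<in> L\<close> by auto
  then show ?thesis by blast
qed

lemma drun_concat_loop_words:
  assumes "x \<in> concat ` lists (loop_words Sig d s Fa dA u)"
  shows "drun d u x = u"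
proof -
  obtain vs where "x = concat vs" "vs \<in> lists (loop_words Sig d s Fa dA u)"
    using assms by blast
  then show ?thesis
    by (induction vs arbitrary: x) (auto simp: drun_append loop_words_def)
qed

lemma infinite_image_unbounded_mono:
  fixes f :: "nat \<Rightarrow> nat"
  assumes "mono f" and "\<And>n. \<exists>i. n \<le> f i" and "infinite I"
  shows "infinite (f ` I)"
  unfolding infinite_nat_iff_unbounded_le
proof
  fix m
  obtain i where "m \<le> f i" using assms(2) by blast
  moreover obtain j where "i \<le> j" "j \<in> I"
    using assms(3) unfolding infinite_nat_iff_unbounded_le by blast
  ultimately have "m \<le> f j" using monoD[OF assms(1)] le_trans by blast
  then show "\<exists>n\<ge>m. n \<in> f ` I" using \<open>j \<in> I\<close> by blast
qed

lemma infinite_nat_set_obtains_congruent_pair: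
  fixes P :: "nat set"
  assumes "infinite P" and "0 < L"
  obtains p q where "p \<in> P" "q \<in> P" "p < q" "L dvd q - p"
proof -
  have "finite ((\<lambda>x. x mod L) ` P)"
    by (rule finite_subset[of _ "{..<L}"]) (use assms(2) in auto)
  then obtain a where a: "infinite {x \<in> P. x mod L = a mod L}"
    using pigeonhole_infinite[OF assms(1)] by blast
  then obtain p where p: "p \<in> P" "p mod L = a mod L"
    using not_finite_existsD by blast
  obtain q where q: "Suc p \<le> q" "q \<in> P" "q mod L = a mod L"
    using a unfolding infinite_nat_iff_unbounded_le by blast
  show thesis
    by (rule that[OF p(1) q(2)]) (use p q mod_eq_dvd_iff_nat[of p q L] in auto)
qed

lemma conc_iter_add_period:
  assumes "v \<noteq> []" and "length u \<le> n"
  shows "(u \<frown> v\<^sup>\<omega>) (n + k * length v) = (u \<frown> v\<^sup>\<omega>) n"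
proof -
  have "n + k * length v - length u = (n - length u) + k * length v" using assms(2) by simp
  then have "(n + k * length v - length u) mod length v = (n - length u) mod length v" by simp
  with assms show ?thesis by simp
qed

lemma eventually_periodic_eq_conc_iter:
  assumes "0 < L" and period: "\<And>n. p \<le> n \<Longrightarrow> w (n + L) = w n"
  shows "w = prefix p w \<frown> (w [p \<rightarrow> p + L])\<^sup>\<omega>"
proof
  fix n
  have shift: "w (m + k * L) = w m" if "p \<le> m" for m k
  proof (induction k)
    case (Suc k)
    have "w (m + Suc k * L) = w (m + k * L)" using period[of "m + k * L"] that by (simp add: ac_simps)
    with Suc show ?case by simp
  qed simp
  show "w n = (prefix p w \<frown> (w [p \<rightarrow> p + L])\<^sup>\<omega>) n"
  proof (cases "n < p")
    case False
    have "n = (p + (n - p) mod L) + ((n - p) div L) * L" using False by simp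
    then have "w n = w (p + (n - p) mod L)" by (metis shift le_add1)
    then show ?thesis using False assms(1) by simp
  qed simp
qed

lemma conc_iter_resplit:
  assumes "v \<noteq> []" and "length u \<le> p" and "p < q" and "length v dvd q - p"
  shows "u \<frown> v\<^sup>\<omega> = prefix p (u \<frown> v\<^sup>\<omega>) \<frown> ((u \<frown> v\<^sup>\<omega>) [p \<rightarrow> q])\<^sup>\<omega>"
proof -
  obtain k where k: "q - p = k * length v" using assms(4) by (metis dvd_def mult.commute)
  have "(u \<frown> v\<^sup>\<omega>) (n + (q - p)) = (u \<frown> v\<^sup>\<omega>) n" if "p \<le> n" for n
    unfolding k using conc_iter_add_period assms(1,2) that by fastforce
  then show ?thesis
    using eventually_periodic_eq_conc_iter[of "q - p" p "u \<frown> v\<^sup>\<omega>"] assms(3) by simp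
qed

locale bbar_run =
  fixes Sig :: "'a set" and Q :: "'q set" and d :: "'q \<Rightarrow> 'a \<Rightarrow> 'q"
    and QA :: "'q \<Rightarrow> 's set" and s :: "'q \<Rightarrow> 's" and Fa :: "'q \<Rightarrow> 's set"
    and dA :: "'q \<Rightarrow> 's \<Rightarrow> 'a \<Rightarrow> 's"
    and r :: "nat \<Rightarrow> ('q, 's) bstate" and l :: "nat \<Rightarrow> 'a option" and w :: "'a word"
  assumes run_step: "bstep Sig Q d QA s Fa dA (r i) (l i) (r (Suc i))"
    and run_reads: "l i = Some a \<Longrightarrow> w (consumed l i) = a"
begin

abbreviation loops :: "'q \<Rightarrow> 'a list set" where
  "loops u \<equiv> concat ` lists (loop_words Sig d s Fa dA u)"

lemma subsequence_consumed_Suc_Some: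
  assumes "l i = Some a" and "k \<le> consumed l i"
  shows "w [k \<rightarrow> consumed l (Suc i)] = w [k \<rightarrow> consumed l i] @ [a]"
  using assms run_reads[OF assms(1)] by (simp add: consumed_Suc)

lemma consumed_prefix_in_Sig: "set (prefix (consumed l i) w) \<subseteq> Sig"
proof (induction i)
  case (Suc i)
  show ?case
  proof (cases "l i")
    case (Some a)
    from run_step[of i] Some have "a \<in> Sig" by cases auto
    with Suc Some show ?thesis by (simp add: subsequence_consumed_Suc_Some)
  qed (use Suc in \<open>simp add: consumed_Suc\<close>)
qed (simp add: consumed_def)

lemma Top_state_eq_drun:
  assumes "r 0 = Top q0" and "r i = Top p"
  shows "p = drun d q0 (prefix (consumed l i) w)"
  using assms(2)
proof (induction i arbitrary: p)
  case (Suc i)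
  from run_step[of i] show ?case
  proof cases
    case (top p0 a)
    with Suc.IH[of p0] Suc.prems show ?thesis by (simp add: subsequence_consumed_Suc_Some)
  qed (use Suc.prems in simp_all)
qed (use assms(1) in \<open>simp add: consumed_def\<close>)

lemma obtain_enter_step:
  assumes "r 0 = Top q0" and "\<And>p. r i \<noteq> Top p"
  obtains e u t where "e < i" "r e = Top u" "l e = None" "r (Suc e) = Inner u t u (s u)"
  using assms(2)
proof (induction i)
  case (Suc i)
  show ?case
  proof (cases "\<exists>p. r i = Top p")
    case True
    with run_step[of i] Suc.prems(2) show ?thesis
      by cases (auto intro: Suc.prems(1))
  next
    case False
    then show ?thesis using Suc by (meson less_SucI)
  qed
qed (use assms(1) in blast)

text \<open>The invariant of a run inside the component of \<open>u\<close> entered at position \<open>c0\<close>: the word read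
  so far splits into completed loops \<open>w[c0,k)\<close> and the current pass \<open>w[k,c)\<close>, whose \<open>M\<close>- and
  \<open>A\<^sup>u\<close>-states the \<open>Inner\<close> state records.\<close>
definition in_component :: "'q \<Rightarrow> nat \<Rightarrow> ('q, 's) bstate \<Rightarrow> nat \<Rightarrow> bool" where
  "in_component u c0 st c \<longleftrightarrow> (case st of
      Top _ \<Rightarrow> False
    | Inner u' _ p b \<Rightarrow> u' = u \<and> (\<exists>k. c0 \<le> k \<and> k \<le> c \<and> w [c0 \<rightarrow> k] \<in> loops u \<and>
          drun d u (w [k \<rightarrow> c]) = p \<and> drun (dA u) (s u) (w [k \<rightarrow> c]) = b)
    | Fresh u' _ \<Rightarrow> u' = u \<and> c0 \<le> c \<and> w [c0 \<rightarrow> c] \<in> loops u)"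

lemma in_component_step:
  assumes "in_component u c0 (r i) (consumed l i)"
  shows "in_component u c0 (r (Suc i)) (consumed l (Suc i))"
  using run_step[of i]
proof cases
  case (inner u' t p b a)
  with assms obtain k where "c0 \<le> k" "k \<le> consumed l i" "w [c0 \<rightarrow> k] \<in> loops u"
    "drun d u (w [k \<rightarrow> consumed l i]) = p"
    "drun (dA u) (s u) (w [k \<rightarrow> consumed l i]) = b" "u' = u"
    unfolding in_component_def by auto
  moreover have "w [k \<rightarrow> consumed l (Suc i)] = w [k \<rightarrow> consumed l i] @ [a]"
    using subsequence_consumed_Suc_Some inner(2) \<open>k \<le> consumed l i\<close> .
  moreover have "consumed l i \<le> consumed l (Suc i)" by (simp add: consumed_Suc)
  ultimately show ?thesis
    using inner unfolding in_component_def by (auto intro!: exI[of _ k])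
next
  case (to_fresh u' t)
  with assms obtain k where k: "c0 \<le> k" "k \<le> consumed l i" "w [c0 \<rightarrow> k] \<in> loops u"
    and loop: "drun d u (w [k \<rightarrow> consumed l i]) = u"
    and acc: "drun (dA u) (s u) (w [k \<rightarrow> consumed l i]) = t"
    and "u' = u"
    unfolding in_component_def by auto
  have "set (w [k \<rightarrow> consumed l i]) \<subseteq> Sig"
    using consumed_prefix_in_Sig[of i] by auto
  with loop acc to_fresh \<open>u' = u\<close> have "w [k \<rightarrow> consumed l i] \<in> loop_words Sig d s Fa dA u"
    by (simp add: loop_words_def acc_A_def)
  with k have "w [c0 \<rightarrow> consumed l i] \<in> loops u"
    using subsequence_split[of c0 k "consumed l i" w] concat_lists_snoc by simp
  with k to_fresh \<open>u' = u\<close> show ?thesis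
    unfolding in_component_def by (simp add: consumed_Suc)
next
  case (from_fresh u' t)
  with assms show ?thesis
    unfolding in_component_def by (auto simp: consumed_Suc)
qed (use assms in \<open>simp_all add: in_component_def\<close>)

lemma in_component_later:
  assumes "in_component u c0 (r i) (consumed l i)" and "i \<le> j"
  shows "in_component u c0 (r j) (consumed l j)"
  using assms(2,1) by (induction j rule: dec_induct) (auto intro: in_component_step)

lemma loops_between_Fresh_states:
  assumes "r i = Fresh u t" and "i \<le> j" and "r j = Fresh u' t'"
  shows "w [consumed l i \<rightarrow> consumed l j] \<in> loops u"
proof -
  have "in_component u (consumed l i) (r i) (consumed l i)"
    using assms(1) unfolding in_component_def by simp
  from in_component_later[OF this assms(2)] assms(3) show ?thesis
    unfolding in_component_def by auto
qed

lemma Fresh_state_eq_drun: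
  assumes "r 0 = Top q0" and "r i = Fresh u t"
  shows "drun d q0 (prefix (consumed l i) w) = u"
proof -
  have "\<And>p. r i \<noteq> Top p" using assms(2) by simp
  then obtain e u0 t0 where e: "e < i" "r e = Top u0" "l e = None" "r (Suc e) = Inner u0 t0 u0 (s u0)"
    by (rule obtain_enter_step[OF assms(1)])
  let ?k = "consumed l e"
  have "consumed l (Suc e) = ?k" using e(3) by (simp add: consumed_Suc)
  with e(4) have "in_component u0 ?k (r (Suc e)) (consumed l (Suc e))"
    unfolding in_component_def by (auto intro!: exI[of _ ?k])
  from in_component_later[OF this, of i] e(1) assms(2)
  have "u = u0" "?k \<le> consumed l i" "w [?k \<rightarrow> consumed l i] \<in> loops u0"
    unfolding in_component_def by auto
  moreover have "drun d q0 (prefix ?k w) = u0"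
    using Top_state_eq_drun[OF assms(1) e(2)] by simp
  ultimately show ?thesis
    using subsequence_split[of 0 ?k "consumed l i" w] by (simp add: drun_append drun_concat_loop_words)
qed

lemma obtain_congruent_Fresh_states:
  assumes "\<exists>\<^sub>\<infinity>i. \<exists>u t. r i = Fresh u t" and "\<And>n. \<exists>i. n \<le> consumed l i" and "0 < L"
  obtains i j u t u' t' where "r i = Fresh u t" "i \<le> j" "r j = Fresh u' t'"
    "m \<le> consumed l i" "consumed l i < consumed l j" "L dvd consumed l j - consumed l i"
proof -
  have "infinite (consumed l ` {i. \<exists>u t. r i = Fresh u t} - {..<m})"
    using infinite_image_unbounded_mono[OF mono_consumed assms(2)] assms(1)
    by (simp add: INFM_iff_infinite)
  then obtain p q where "p \<in> consumed l ` {i. \<exists>u t. r i = Fresh u t} - {..<m}"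
    "q \<in> consumed l ` {i. \<exists>u t. r i = Fresh u t} - {..<m}" "p < q" "L dvd q - p"
    using assms(3) by (rule infinite_nat_set_obtains_congruent_pair)
  then obtain i j u t u' t' where ij: "r i = Fresh u t" "r j = Fresh u' t'"
    "p = consumed l i" "q = consumed l j" "m \<le> p"
    by auto
  moreover have "i \<le> j"
    using monoD[OF mono_consumed[of l], of j i] \<open>p < q\<close> ij(3,4) by (cases "j \<le> i") auto
  ultimately show thesis
    using that \<open>p < q\<close> \<open>L dvd q - p\<close> by blast
qed

end

theorem lemma5:
  assumes "fdfa Sig Q q0 d QA s Fa dA"
    and "w \<in> UP (lang_Bbar Sig Q q0 d QA s Fa dA)"
  shows "\<exists>u v. set u \<subseteq> Sig \<and> set v \<subseteq> Sig \<and> v \<noteq> [] \<and> w = u \<frown> v\<^sup>\<omega> \<and>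
           (\<exists>vs. length vs \<ge> 1 \<and> v = concat vs \<and>
              (\<forall>x\<in>set vs. x \<in> acc_A Sig s Fa dA (drun d q0 u) \<and>
                          drun d q0 (u @ x) = drun d q0 u))"
proof -
  from assms(2) obtain u' v' r l where v': "v' \<noteq> []" and w: "w = u' \<frown> v'\<^sup>\<omega>"
    and r0: "r 0 = Top q0" and run: "bbar_run Sig Q d QA s Fa dA r l w"
    and unbounded: "\<And>n. \<exists>i. n \<le> consumed l i"
    and fresh: "\<exists>\<^sub>\<infinity>i. \<exists>u t. r i = Fresh u t"
    unfolding UP_def lang_Bbar_def bbar_run_def by blast
  interpret bbar_run Sig Q d QA s Fa dA r l w by (fact run)
  have "0 < length v'" using v' by simp
  then obtain i j U T U' T' where ij: "r i = Fresh U T" "i \<le> j" "r j = Fresh U' T'"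
    and pos: "length u' \<le> consumed l i" "consumed l i < consumed l j"
      "length v' dvd consumed l j - consumed l i"
    by (rule obtain_congruent_Fresh_states[OF fresh unbounded])
  let ?p = "consumed l i" and ?q = "consumed l j"
  have U: "drun d q0 (prefix ?p w) = U"
    using Fresh_state_eq_drun[OF r0 ij(1)] by simp
  have "w [?p \<rightarrow> ?q] \<in> loops U"
    using loops_between_Fresh_states[OF ij] by simp
  then obtain vs where vs: "w [?p \<rightarrow> ?q] = concat vs" "vs \<in> lists (loop_words Sig d s Fa dA U)"
    by blast
  have "w = prefix ?p w \<frown> (w [?p \<rightarrow> ?q])\<^sup>\<omega>"
    unfolding w by (rule conc_iter_resplit) (use v' pos in auto)
  moreover have "set (prefix ?p w) \<subseteq> Sig" "set (w [?p \<rightarrow> ?q]) \<subseteq> Sig"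
    using consumed_prefix_in_Sig[of j] pos(2) by auto
  moreover have "w [?p \<rightarrow> ?q] \<noteq> []" using pos(2) by simp
  moreover from this have "length vs \<ge> 1" using vs(1) by (cases vs) auto
  moreover have "\<forall>x\<in>set vs. x \<in> acc_A Sig s Fa dA (drun d q0 (prefix ?p w)) \<and>
      drun d q0 (prefix ?p w @ x) = drun d q0 (prefix ?p w)"
    using vs(2) U by (auto simp: loop_words_def drun_append)
  ultimately show ?thesis
    using vs(1) by blast
qed

end
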